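(* Let $d=1$, $I=[-\tfrac12,\tfrac12]$, $f=g=1_I$, $\overline h=2\cdot1_{I^2}$ and $c(x,y)=\tfrac12|x-y|^2$. Then $h:=2\cdot 1_{[-\frac12,0]^2\cup[0,\frac12]^2}$ belongs to $\Gamma(f,g)^{\overline h}$ and minimizes $I_c$ over $\Gamma(f,g)^{\overline h}$. Moreover, with $u(x)=-\tfrac12x^2$, $v(y)=-\tfrac12y^2$, $S=\{(x,y):xy\ge0\}$ and $w=(c+u+v)1_S$ (so $w(x,y)=-xy\,1_{\{xy\ge0\}}$), the triple $(u,v,w)$ satisfies $c+u+v-w\ge0$, $w\le0$, and $\int c\,h=-\int uf-\int vg+\int w\,\overline h$.
   Context: $\Gamma(f,g)^{\overline h}$: nonnegative compactly supported integrable densities $h$ on $\mathbb{R}^2$ with marginals $\int h(x,y)dy=f(x)$, $\int h(x,y)dx=g(y)$ a.e. and $h\le\overline h$ a.e.; $I_c(h):=\int c\,h$. *)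

theory Defs
  imports "HOL-Analysis.Analysis"
begin

definition Gamma_cap ::
  "(real \<Rightarrow> real) \<Rightarrow> (real \<Rightarrow> real) \<Rightarrow> (real \<times> real \<Rightarrow> real) \<Rightarrow> (real \<times> real \<Rightarrow> real) set" where
  "Gamma_cap f g hbar = {h.
      (\<forall>p. 0 \<le> h p)
    \<and> (\<exists>K. compact K \<and> (\<forall>p. p \<notin> K \<longrightarrow> h p = 0))
    \<and> integrable lborel h
    \<and> (AE x in lborel. (LINT y|lborel. h (x, y)) = f x)
    \<and> (AE y in lborel. (LINT x|lborel. h (x, y)) = g y)
    \<and> (AE p in lborel. h p \<le> hbar p)}"

definition I_cost :: "(real \<times> real \<Rightarrow> real) \<Rightarrow> (real \<times> real \<Rightarrow> real) \<Rightarrow> real" where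
  "I_cost c h = (LINT p|lborel. c p * h p)"

end

theory Submission imports Defs begin

(* Proof idea: Kantorovich-type duality for the capacity-constrained transport problem.
   For an admissible plan h' (marginals f, g, bounded by hbar) and dual potentials
   (u, v, w) with c + u + v - w >= 0 and w <= 0, integrating against h' gives the weak
   duality bound  I_c(h') >= -int u f - int v g + int w hbar, because the marginal
   constraints turn the u- and v-terms into integrals against f and g, and w <= 0 with
   h' <= hbar gives int w h' >= int w hbar.  If moreover complementary slackness holds
   for h (w hbar = (c + u + v) h pointwise), the bound is an equality for h, so h is
   optimal. *)

text \<open>Every plan has compact support, so continuous weights are integrable against it.\<close>
lemma Gamma_cap_integrable_mult:
  fixes phi :: "real \<times> real \<Rightarrow> real"
  assumes hG: "h \<in> Gamma_cap f g hbar" and phi_cont: "continuous_on UNIV phi"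
  shows "integrable lborel (\<lambda>p. phi p * h p)"
proof -
  from hG obtain K where K: "compact K" "\<And>p. p \<notin> K \<Longrightarrow> h p = 0"
    and h_nonneg: "\<And>p. 0 \<le> h p" and h_int: "integrable lborel h"
    unfolding Gamma_cap_def by blast
  have "bounded (phi ` K)"
    by (intro compact_imp_bounded compact_continuous_image
        continuous_on_subset[OF phi_cont] K(1)) auto
  then obtain B where B: "\<And>p. p \<in> K \<Longrightarrow> \<bar>phi p\<bar> \<le> B"
    unfolding bounded_iff by auto
  have meas: "(\<lambda>p. phi p * h p) \<in> borel_measurable lborel"
    using borel_measurable_continuous_onI[OF phi_cont] borel_measurable_integrable[OF h_int]
    by measurable
  have "norm (phi p * h p) \<le> norm (B * h p)" for p
    using B[of p] K(2)[of p] h_nonneg[of p] by (cases "p \<in> K") (auto simp: abs_mult mult_right_mono)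
  then show ?thesis
    by (intro Bochner_Integration.integrable_bound[OF _ meas AE_I2, of "\<lambda>p. B * h p"]) (simp_all add: h_int)
qed

lemma Gamma_cap_integral_fst:
  assumes hG: "h \<in> Gamma_cap f g hbar" and u_cont: "continuous_on UNIV u"
    and f_meas: "f \<in> borel_measurable lborel"
  shows "(LINT p|lborel. u (fst p) * h p) = (LINT x|lborel. u x * f x)"
proof -
  have "integrable lborel (\<lambda>p. u (fst p) * h p)"
    by (intro Gamma_cap_integrable_mult[OF hG] continuous_on_compose2[OF u_cont] continuous_intros) auto
  then have int_prod: "integrable (lborel \<Otimes>\<^sub>M lborel) (\<lambda>(x, y). u x * h (x, y))"
    by (simp add: lborel_prod split_beta')
  have "(LINT p|lborel. u (fst p) * h p) = (LINT x|lborel. LINT y|lborel. u x * h (x, y))"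
    using lborel_pair.integral_fst[OF int_prod] by (simp add: lborel_prod split_beta')
  also have "\<dots> = (LINT x|lborel. u x * f x)"
  proof (rule integral_cong_AE)
    show "(\<lambda>x. LINT y|lborel. u x * h (x, y)) \<in> borel_measurable lborel"
      using lborel_pair.integrable_fst[OF int_prod] by (rule borel_measurable_integrable)
    show "(\<lambda>x. u x * f x) \<in> borel_measurable lborel"
      using borel_measurable_continuous_onI[OF u_cont] f_meas by measurable
    have "AE x in lborel. (LINT y|lborel. h (x, y)) = f x"
      using hG unfolding Gamma_cap_def by blast
    then show "AE x in lborel. (LINT y|lborel. u x * h (x, y)) = u x * f x"
      by eventually_elim simp
  qed
  finally show ?thesis .
qed

lemma Gamma_cap_integral_snd:
  assumes hG: "h \<in> Gamma_cap f g hbar" and v_cont: "continuous_on UNIV v"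
    and g_meas: "g \<in> borel_measurable lborel"
  shows "(LINT p|lborel. v (snd p) * h p) = (LINT y|lborel. v y * g y)"
proof -
  have "integrable lborel (\<lambda>p. v (snd p) * h p)"
    by (intro Gamma_cap_integrable_mult[OF hG] continuous_on_compose2[OF v_cont] continuous_intros) auto
  then have int_prod: "integrable (lborel \<Otimes>\<^sub>M lborel) (\<lambda>(x, y). v y * h (x, y))"
    by (simp add: lborel_prod split_beta')
  have "(LINT p|lborel. v (snd p) * h p) = (LINT y|lborel. LINT x|lborel. v y * h (x, y))"
    using lborel_pair.integral_snd[OF int_prod] by (simp add: lborel_prod split_beta')
  also have "\<dots> = (LINT y|lborel. v y * g y)"
  proof (rule integral_cong_AE)
    show "(\<lambda>y. LINT x|lborel. v y * h (x, y)) \<in> borel_measurable lborel"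
      using lborel_pair.integrable_snd[OF int_prod] by (rule borel_measurable_integrable)
    show "(\<lambda>y. v y * g y) \<in> borel_measurable lborel"
      using borel_measurable_continuous_onI[OF v_cont] g_meas by measurable
    have "AE y in lborel. (LINT x|lborel. h (x, y)) = g y"
      using hG unfolding Gamma_cap_def by blast
    then show "AE y in lborel. (LINT x|lborel. v y * h (x, y)) = v y * g y"
      by eventually_elim simp
  qed
  finally show ?thesis .
qed

lemma Gamma_cap_weak_duality:
  assumes hG: "h \<in> Gamma_cap f g hbar"
    and cont: "continuous_on UNIV c" "continuous_on UNIV u" "continuous_on UNIV v"
      "continuous_on UNIV w"
    and meas: "f \<in> borel_measurable lborel" "g \<in> borel_measurable lborel"
    and feasible: "\<And>x y. c (x, y) + u x + v y - w (x, y) \<ge> 0" and w_nonpos: "\<And>p. w p \<le> 0"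
    and w_hbar_int: "integrable lborel (\<lambda>p. w p * hbar p)"
  shows "- (LINT x|lborel. u x * f x) - (LINT y|lborel. v y * g y) + (LINT p|lborel. w p * hbar p)
           \<le> I_cost c h"
proof -
  define phi where "phi p = c p + u (fst p) + v (snd p) - w p" for p
  have h_nonneg: "\<And>p. 0 \<le> h p" and h_le: "AE p in lborel. h p \<le> hbar p"
    using hG unfolding Gamma_cap_def by auto
  have cont_fst_snd: "continuous_on UNIV (\<lambda>p::real \<times> real. u (fst p))"
    "continuous_on UNIV (\<lambda>p::real \<times> real. v (snd p))"
    by (intro continuous_on_compose2[OF cont(2)] continuous_on_compose2[OF cont(3)]
        continuous_intros; simp)+
  have ints: "integrable lborel (\<lambda>p. phi p * h p)" "integrable lborel (\<lambda>p. u (fst p) * h p)"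
    "integrable lborel (\<lambda>p. v (snd p) * h p)" "integrable lborel (\<lambda>p. w p * h p)"
    unfolding phi_def
    by (intro Gamma_cap_integrable_mult[OF hG] continuous_on_add continuous_on_diff cont
        cont_fst_snd)+
  have phi_nonneg: "(LINT p|lborel. phi p * h p) \<ge> 0"
    using feasible h_nonneg unfolding phi_def split_paired_all
    by (intro integral_nonneg_AE AE_I2) (simp add: split_paired_all)
  have "AE p in lborel. w p * hbar p \<le> w p * h p"
    using h_le by eventually_elim (simp add: w_nonpos mult_left_mono_neg)
  then have w_mono: "(LINT p|lborel. w p * hbar p) \<le> (LINT p|lborel. w p * h p)"
    by (rule integral_mono_AE[OF w_hbar_int ints(4)])
  have "I_cost c h = (LINT p|lborel. phi p * h p - u (fst p) * h p - v (snd p) * h p + w p * h p)"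
    unfolding I_cost_def phi_def by (simp add: algebra_simps)
  also have "\<dots> = (LINT p|lborel. phi p * h p) - (LINT x|lborel. u x * f x)
                   - (LINT y|lborel. v y * g y) + (LINT p|lborel. w p * h p)"
    using ints by (simp add: Gamma_cap_integral_fst[OF hG cont(2) meas(1)]
        Gamma_cap_integral_snd[OF hG cont(3) meas(2)])
  finally show ?thesis using phi_nonneg w_mono by linarith
qed

lemma Gamma_cap_duality_attained:
  assumes hG: "h \<in> Gamma_cap f g hbar"
    and cont: "continuous_on UNIV u" "continuous_on UNIV v"
    and meas: "f \<in> borel_measurable lborel" "g \<in> borel_measurable lborel"
    and w_hbar_int: "integrable lborel (\<lambda>p. w p * hbar p)"
    and slack: "\<And>p. c p * h p = w p * hbar p - u (fst p) * h p - v (snd p) * h p"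
  shows "I_cost c h
           = - (LINT x|lborel. u x * f x) - (LINT y|lborel. v y * g y) + (LINT p|lborel. w p * hbar p)"
proof -
  have ints: "integrable lborel (\<lambda>p. u (fst p) * h p)" "integrable lborel (\<lambda>p. v (snd p) * h p)"
    by (intro Gamma_cap_integrable_mult[OF hG] continuous_on_compose2[OF cont(1)]
        continuous_on_compose2[OF cont(2)] continuous_intros; simp)+
  have "I_cost c h = (LINT p|lborel. w p * hbar p)
          - (LINT p|lborel. u (fst p) * h p) - (LINT p|lborel. v (snd p) * h p)"
    unfolding I_cost_def slack using w_hbar_int ints by simp
  then show ?thesis
    by (simp add: Gamma_cap_integral_fst[OF hG cont(1) meas(1)]
        Gamma_cap_integral_snd[OF hG cont(2) meas(2)])
qed

lemma integrable_continuous_mult_indicator: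
  fixes phi :: "'a::euclidean_space \<Rightarrow> real"
  assumes "continuous_on UNIV phi" and "compact K"
  shows "integrable lborel (\<lambda>p. phi p * (a * indicator K p))"
proof -
  have "continuous_on K (\<lambda>p. a * phi p)"
    using continuous_on_subset[OF assms(1)] by (intro continuous_intros) simp
  then have "integrable lborel (\<lambda>p. indicator K p *\<^sub>R (a * phi p))"
    using assms(2) by (rule borel_integrable_compact[rotated])
  then show ?thesis by (simp add: mult.commute mult.left_commute)
qed

definition diag_squares :: "(real \<times> real) set" where
  "diag_squares = {-1/2..0} \<times> {-1/2..0} \<union> {0..1/2} \<times> {0..1/2}"

lemma diag_squares_swap: "(x, y) \<in> diag_squares \<longleftrightarrow> (y, x) \<in> diag_squares"
  unfolding diag_squares_def by auto

text \<open>Away from the null set x = 0 each vertical section of the plan has mass 1 exactly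
  when x lies in I.\<close>
lemma diag_plan_section:
  fixes x :: real
  assumes "x \<noteq> 0"
  shows "(LINT y|lborel. (2::real) * indicator diag_squares (x, y)) = indicator {-1/2..1/2::real} x"
proof -
  consider "0 < x \<and> x \<le> 1/2" | "-1/2 \<le> x \<and> x < 0" | "x < -1/2 \<or> 1/2 < x"
    using assms by linarith
  then show ?thesis
  proof cases
    case 1
    then have "(\<lambda>y. (2::real) * indicator diag_squares (x, y)) = (\<lambda>y. 2 * indicator {0..1/2::real} y)"
      by (auto simp: indicator_def fun_eq_iff diag_squares_def)
    then show ?thesis using 1 by simp
  next
    case 2
    then have "(\<lambda>y. (2::real) * indicator diag_squares (x, y)) = (\<lambda>y. 2 * indicator {-1/2..0::real} y)"
      by (auto simp: indicator_def fun_eq_iff diag_squares_def)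
    then show ?thesis using 2 by simp
  next
    case 3
    then have "(\<lambda>y. (2::real) * indicator diag_squares (x, y)) = (\<lambda>y. 0::real)"
      by (auto simp: indicator_def fun_eq_iff diag_squares_def)
    then show ?thesis using 3 by (auto simp: indicator_def)
  qed
qed

lemma diag_plan_admissible:
  "(\<lambda>p. 2 * indicator diag_squares p)
     \<in> Gamma_cap (indicator {-1/2..1/2}) (indicator {-1/2..1/2})
         (\<lambda>p. 2 * indicator ({-1/2..1/2} \<times> {-1/2..1/2}) p)"
  unfolding Gamma_cap_def
proof (intro CollectI conjI allI)
  have compact: "compact diag_squares"
    unfolding diag_squares_def by (intro compact_Un compact_Times compact_Icc)
  then show "\<exists>K. compact K \<and> (\<forall>p. p \<notin> K \<longrightarrow> 2 * indicator diag_squares p = (0::real))"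
    by auto
  show "integrable lborel (\<lambda>p. 2 * indicator diag_squares p :: real)"
    using integrable_continuous_mult_indicator[OF continuous_on_const compact, of 1 2] by simp
  show "AE x in lborel. (LINT y|lborel. (2::real) * indicator diag_squares (x, y))
          = indicator {-1/2..1/2::real} x"
    using AE_lborel_singleton[of "0::real"] by eventually_elim (rule diag_plan_section)
  show "AE y in lborel. (LINT x|lborel. (2::real) * indicator diag_squares (x, y))
          = indicator {-1/2..1/2::real} y"
    using AE_lborel_singleton[of "0::real"]
  proof eventually_elim
    case (elim y)
    have "(\<lambda>x. 2 * indicator diag_squares (x, y)) = (\<lambda>x. (2::real) * indicator diag_squares (y, x))"
      using diag_squares_swap by (auto simp: indicator_def fun_eq_iff)
    then show ?case using diag_plan_section[OF elim] by simp
  qed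
  show "AE p in lborel. 2 * indicator diag_squares p
          \<le> (2 * indicator ({-1/2..1/2} \<times> {-1/2..1/2}) p :: real)"
    by (rule AE_I2) (auto simp: diag_squares_def indicator_def)
qed (simp)

text \<open>Complementary slackness for the example: with c + u + v = -xy and w = min 0 (-xy),
  the capacity term w hbar coincides with (c + u + v) times the plan.\<close>
lemma diag_plan_slackness:
  fixes x y :: real
  shows "min 0 (-(x * y)) * (2 * indicator ({-1/2..1/2} \<times> {-1/2..1/2}) (x, y))
           = -(x * y) * (2 * indicator diag_squares (x, y))"
proof (cases "(x, y) \<in> diag_squares")
  case True
  then have "x * y \<ge> 0"
    unfolding diag_squares_def by (auto simp: mult_nonpos_nonpos)
  with True show ?thesis by (auto simp: diag_squares_def indicator_def)
next
  case False
  then have "x \<in> {-1/2..1/2} \<and> y \<in> {-1/2..1/2} \<longrightarrow> x * y < 0"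
    unfolding diag_squares_def by (auto simp: mult_pos_neg mult_neg_pos)
  with False show ?thesis by (auto simp: indicator_def)
qed

theorem mainTheorem13:
  fixes f g :: "real \<Rightarrow> real" and hbar c h w :: "real \<times> real \<Rightarrow> real" and u v :: "real \<Rightarrow> real"
    and S :: "(real \<times> real) set"
  assumes "f = indicator {-1/2..1/2}" and "g = indicator {-1/2..1/2}"
    and "hbar = (\<lambda>p. 2 * indicator ({-1/2..1/2} \<times> {-1/2..1/2}) p)"
    and "c = (\<lambda>(x, y). (1/2) * \<bar>x - y\<bar>^2)"
    and "h = (\<lambda>p. 2 * indicator ({-1/2..0} \<times> {-1/2..0} \<union> {0..1/2} \<times> {0..1/2}) p)"
    and "u = (\<lambda>x. - (1/2) * x^2)" and "v = (\<lambda>y. - (1/2) * y^2)"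
    and "S = {(x, y). x * y \<ge> 0}"
    and "w = (\<lambda>(x, y). (c (x, y) + u x + v y) * indicator S (x, y))"
  shows "h \<in> Gamma_cap f g hbar
    \<and> (\<forall>h' \<in> Gamma_cap f g hbar. I_cost c h \<le> I_cost c h')
    \<and> (\<forall>x y. c (x, y) + u x + v y - w (x, y) \<ge> 0)
    \<and> (\<forall>p. w p \<le> 0)
    \<and> (LINT p|lborel. c p * h p)
        = - (LINT x|lborel. u x * f x) - (LINT y|lborel. v y * g y) + (LINT p|lborel. w p * hbar p)"
proof -
  have cuv: "\<And>x y. c (x, y) + u x + v y = -(x * y)"
    using assms(4,6,7) by (simp add: power2_eq_square algebra_simps)
  have w_eq: "w = (\<lambda>p. min 0 (-(fst p * snd p)))"
  proof
    fix p :: "real \<times> real"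
    show "w p = min 0 (-(fst p * snd p))"
      using cuv[of "fst p" "snd p"] unfolding assms(8,9) by (cases p) (auto simp: indicator_def)
  qed
  have feasible: "\<And>x y. c (x, y) + u x + v y - w (x, y) \<ge> 0" and w_nonpos: "\<And>p. w p \<le> 0"
    using cuv w_eq by auto
  have cont: "continuous_on UNIV c" "continuous_on UNIV u" "continuous_on UNIV v"
    "continuous_on UNIV w"
    unfolding assms(4,6,7) w_eq split_beta' by (intro continuous_intros)+
  have meas: "f \<in> borel_measurable lborel" "g \<in> borel_measurable lborel"
    unfolding assms(1,2) by simp_all
  have h_diag: "h = (\<lambda>p. 2 * indicator diag_squares p)"
    unfolding assms(5) diag_squares_def ..
  have hG: "h \<in> Gamma_cap f g hbar"
    using diag_plan_admissible unfolding assms(1-3) h_diag .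
  have w_hbar_int: "integrable lborel (\<lambda>p. w p * hbar p)"
    unfolding assms(3) by (intro integrable_continuous_mult_indicator cont compact_Times compact_Icc)
  have slackness: "w (x, y) * hbar (x, y) = (c (x, y) + u x + v y) * h (x, y)" for x y
    unfolding cuv w_eq assms(3) h_diag fst_conv snd_conv by (rule diag_plan_slackness)
  have "c p * h p = w p * hbar p - u (fst p) * h p - v (snd p) * h p" for p
    using slackness[of "fst p" "snd p"] by (simp add: algebra_simps)
  then have attained: "I_cost c h = - (LINT x|lborel. u x * f x) - (LINT y|lborel. v y * g y)
                                      + (LINT p|lborel. w p * hbar p)"
    by (intro Gamma_cap_duality_attained[OF hG cont(2,3) meas w_hbar_int])
  have "I_cost c h \<le> I_cost c h'" if "h' \<in> Gamma_cap f g hbar" for h'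
    unfolding attained
    by (rule Gamma_cap_weak_duality[OF that cont meas feasible w_nonpos w_hbar_int])
  then show ?thesis
    using hG feasible w_nonpos attained unfolding I_cost_def by blast
qed

end
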